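(* Let $c\ge 2$ be an integer and $\mathcal{P}$ a finite bias distribution. Consider a single code position: a value $p$ is drawn from $\mathcal{P}$; $\ell$ pirates ($2\le\ell\le c$) receive bits $b_1,\dots,b_\ell\in\{0,1\}$ that are, given $p$, independent with $\Pr(b_i=1)=p$; the pirates output $y\in\{0,1,?\}$ via a (possibly randomized) strategy depending only on $(b_1,\dots,b_\ell)$ (so that, given the bits, $y$ is independent of $p$) and satisfying: if $b_1=\dots=b_\ell$ then $y=b_1$. For $I\subset\{1,\dots,\ell\}$ with $x:=|I|$, $1\le x\le\ell-1$, let $\mathcal{B}_I$ be the event that $b_i=1$ exactly for $i\in I$, and $\mathcal{B}'_I=\mathcal{B}_I\wedge(y=1)$. Then the following are equivalent: (a) for every $2\le\ell\le c$, every such $I$, and every strategy with $\Pr(\mathcal{B}'_I)>0$, the conditional expectation $$\sum_{p}\Pr(p\mid\mathcal{B}'_I)\bigl(x\sigma(p)-(\ell-x)\sigma(1-p)\bigr)$$ (sum over the possible outputs $p$ of $\mathcal{P}$) equals $0$; (b) $\mathcal{P}$ is $c$-indistinguishable.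
   Context: A finite bias distribution is a probability distribution $\mathcal{P}$ supported on a finite subset of $(0,1)$ that is symmetric: it outputs $a$ and $1-a$ with the same probability. $E_p$ is expectation over $p\sim\mathcal{P}$. $\sigma(p)=\sqrt{(1-p)/p}$; for integers $\ell\ge1$, $0\le x\le\ell$, $f_{\ell,x}(p)=p^x(1-p)^{\ell-x}(x\sigma(p)-(\ell-x)\sigma(1-p))$ and $R_{\ell,x}=\max\{0,E_p[f_{\ell,x}(p)]\}$. $\mathcal{P}$ is $c$-indistinguishable if $\sum_{x=1}^{\ell-1}\binom{\ell}{x}R_{\ell,x}=0$ for all $2\le\ell\le c$. *)

theory Defs
  imports "HOL-Probability.Probability"
begin

definition finite_bias_dist :: "real pmf \<Rightarrow> bool" where
  "finite_bias_dist P \<longleftrightarrow> finite (set_pmf P) \<and> set_pmf P \<subseteq> {0<..<1} \<and>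
     (\<forall>a. pmf P a = pmf P (1 - a))"

definition bias_sigma :: "real \<Rightarrow> real" where
  "bias_sigma p = sqrt ((1 - p) / p)"

definition fbias :: "nat \<Rightarrow> nat \<Rightarrow> real \<Rightarrow> real" where
  "fbias l x p = p ^ x * (1 - p) ^ (l - x) *
     (real x * bias_sigma p - real (l - x) * bias_sigma (1 - p))"

definition Rterm :: "real pmf \<Rightarrow> nat \<Rightarrow> nat \<Rightarrow> real" where
  "Rterm P l x = max 0 (measure_pmf.expectation P (fbias l x))"

definition c_indist :: "nat \<Rightarrow> real pmf \<Rightarrow> bool" where
  "c_indist c P \<longleftrightarrow>
     (\<forall>l. 2 \<le> l \<and> l \<le> c \<longrightarrow> (\<Sum>x = 1..l-1. real (l choose x) * Rterm P l x) = 0)"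

datatype sym = Zero | One | Erasure

text \<open>A pirate strategy for l pirates: maps the bit vector (indices 1..l, False elsewhere)
  to a distribution over outputs; must output the common bit when all bits agree.\<close>
definition valid_strategy :: "nat \<Rightarrow> ((nat \<Rightarrow> bool) \<Rightarrow> sym pmf) \<Rightarrow> bool" where
  "valid_strategy l strat \<longleftrightarrow>
     (\<forall>b. (\<forall>i. i \<notin> {1..l} \<longrightarrow> \<not> b i) \<longrightarrow> (\<forall>i\<in>{1..l}. b i = b 1) \<longrightarrow>
        strat b = return_pmf (if b 1 then One else Zero))"

definition pirate_exp :: "real pmf \<Rightarrow> nat \<Rightarrow> ((nat \<Rightarrow> bool) \<Rightarrow> sym pmf)
    \<Rightarrow> (real \<times> (nat \<Rightarrow> bool) \<times> sym) pmf" where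
  "pirate_exp P l strat =
     bind_pmf P (\<lambda>p. bind_pmf (Pi_pmf {1..l} False (\<lambda>_. bernoulli_pmf p))
       (\<lambda>b. bind_pmf (strat b) (\<lambda>y. return_pmf (p, b, y))))"

definition evB' :: "nat set \<Rightarrow> (real \<times> (nat \<Rightarrow> bool) \<times> sym) set" where
  "evB' I = {(p, b, y). b = (\<lambda>i. i \<in> I) \<and> y = One}"

end

theory Submission
  imports Defs
begin

text \<open>
  Given the bits, the output y is independent of p, so conditioning on B'_I weights each bias p
  by Pr(p) p^x (1-p)^(l-x) times the constant Pr(y = 1 | bits = I). Hence, whenever Pr(B'_I) > 0,
  the conditional mean of the score is a positive multiple of E_p f_{l,x}(p), and (a) says exactly
  that all these expectations vanish; a strategy answering 1 on every mixed bit vector makes every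
  B'_I possible. All R_{l,x} vanish iff all these expectations are nonpositive, and by symmetry of
  the bias distribution E_p f_{l,l-x} = - E_p f_{l,x}, so this forces them to vanish.
\<close>

lemma pmf_pirate_exp:
  "pmf (pirate_exp P l strat) (p, b, y) =
     pmf P p * pmf (Pi_pmf {1..l} False (\<lambda>_. bernoulli_pmf p)) b * pmf (strat b) y"
proof -
  have pmf_output: "pmf (bind_pmf (strat b') (\<lambda>y'. return_pmf (p', b', y'))) (p, b, y)
      = (if p' = p \<and> b' = b then pmf (strat b) y else 0)" for p' b'
    unfolding pmf_bind by (subst integral_measure_pmf_real[of "{y}"]) (auto simp: indicator_def)
  have pmf_bits: "pmf (bind_pmf (Pi_pmf {1..l} False (\<lambda>_. bernoulli_pmf p'))
        (\<lambda>b'. bind_pmf (strat b') (\<lambda>y'. return_pmf (p', b', y')))) (p, b, y)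
      = (if p' = p then pmf (Pi_pmf {1..l} False (\<lambda>_. bernoulli_pmf p)) b * pmf (strat b) y else 0)"
    for p'
    unfolding pmf_bind[of "Pi_pmf {1..l} False (\<lambda>_. bernoulli_pmf p')"] pmf_output
    by (subst integral_measure_pmf_real[of "{b}"]) (auto split: if_splits)
  show ?thesis
    unfolding pirate_exp_def pmf_bind[of P] pmf_bits
    by (subst integral_measure_pmf_real[of "{p}"]) (auto split: if_splits)
qed

lemma pmf_Pi_bernoulli_indicator:
  assumes "finite A" "I \<subseteq> A" "0 \<le> p" "p \<le> 1"
  shows "pmf (Pi_pmf A False (\<lambda>_. bernoulli_pmf p)) (\<lambda>i. i \<in> I)
           = p ^ card I * (1 - p) ^ (card A - card I)"
proof -
  have "pmf (Pi_pmf A False (\<lambda>_. bernoulli_pmf p)) (\<lambda>i. i \<in> I) = (\<Prod>i\<in>A. if i \<in> I then p else 1 - p)"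
    using assms by (subst pmf_Pi') (auto intro!: prod.cong)
  also have "\<dots> = p ^ card (A \<inter> I) * (1 - p) ^ card (A - I)"
    using assms(1) by (simp add: prod.If_cases Diff_eq)
  finally show ?thesis
    using assms(1,2) by (simp add: Int_absorb1 card_Diff_subset finite_subset)
qed

lemma prob_evB'_fiber:
  assumes "I \<subseteq> {1..l}" "0 \<le> p" "p \<le> 1"
  shows "measure_pmf.prob (pirate_exp P l strat) {\<omega> \<in> evB' I. fst \<omega> = p}
           = pmf P p * (p ^ card I * (1 - p) ^ (l - card I)) * pmf (strat (\<lambda>i. i \<in> I)) One"
proof -
  have "{\<omega> \<in> evB' I. fst \<omega> = p} = {(p, \<lambda>i. i \<in> I, One)}"
    by (auto simp: evB'_def)
  then show ?thesis
    using assms by (simp add: measure_pmf_single pmf_pirate_exp pmf_Pi_bernoulli_indicator)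
qed

lemma prob_evB'_pos:
  assumes "set_pmf P \<subseteq> {0<..<1}" "I \<subseteq> {1..l}" "pmf (strat (\<lambda>i. i \<in> I)) One > 0"
  shows "measure_pmf.prob (pirate_exp P l strat) (evB' I) > 0"
proof -
  obtain p where p: "p \<in> set_pmf P"
    using set_pmf_not_empty[of P] by blast
  with assms have "0 < measure_pmf.prob (pirate_exp P l strat) {\<omega> \<in> evB' I. fst \<omega> = p}"
    by (subst prob_evB'_fiber) (auto simp: pmf_positive)
  also have "\<dots> \<le> measure_pmf.prob (pirate_exp P l strat) (evB' I)"
    by (rule measure_pmf.finite_measure_mono) auto
  finally show ?thesis .
qed

definition posterior_score :: "real pmf \<Rightarrow> nat \<Rightarrow> ((nat \<Rightarrow> bool) \<Rightarrow> sym pmf) \<Rightarrow> nat set \<Rightarrow> real" where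
  "posterior_score P l strat I =
     (\<Sum>p\<in>set_pmf P.
        measure_pmf.prob (pirate_exp P l strat) {\<omega> \<in> evB' I. fst \<omega> = p}
          / measure_pmf.prob (pirate_exp P l strat) (evB' I)
        * (real (card I) * bias_sigma p - real (l - card I) * bias_sigma (1 - p)))"

lemma posterior_score_eq:
  assumes "finite (set_pmf P)" "set_pmf P \<subseteq> {0..1}" "I \<subseteq> {1..l}"
  shows "posterior_score P l strat I
           = pmf (strat (\<lambda>i. i \<in> I)) One * measure_pmf.expectation P (fbias l (card I))
               / measure_pmf.prob (pirate_exp P l strat) (evB' I)"
proof -
  let ?q = "pmf (strat (\<lambda>i. i \<in> I)) One" and ?B = "measure_pmf.prob (pirate_exp P l strat) (evB' I)"
  have "posterior_score P l strat I = (\<Sum>p\<in>set_pmf P. ?q * (fbias l (card I) p * pmf P p) / ?B)"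
    unfolding posterior_score_def
    using assms(2,3) by (intro sum.cong refl) (auto simp: prob_evB'_fiber fbias_def)
  also have "\<dots> = ?q * (\<Sum>p\<in>set_pmf P. fbias l (card I) p * pmf P p) / ?B"
    by (simp add: sum_divide_distrib sum_distrib_left)
  also have "(\<Sum>p\<in>set_pmf P. fbias l (card I) p * pmf P p) = measure_pmf.expectation P (fbias l (card I))"
    using assms(1) by (simp add: integral_measure_pmf_real)
  finally show ?thesis .
qed

definition one_unless_unanimous :: "nat \<Rightarrow> (nat \<Rightarrow> bool) \<Rightarrow> sym pmf" where
  "one_unless_unanimous l b =
     return_pmf (if (\<forall>i\<in>{1..l}. b i = b 1) \<and> \<not> b 1 then Zero else One)"

lemma valid_strategy_one_unless_unanimous: "valid_strategy l (one_unless_unanimous l)"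
  unfolding valid_strategy_def
proof (intro allI impI)
  fix b :: "nat \<Rightarrow> bool"
  assume "\<forall>i\<in>{1..l}. b i = b 1"
  then have "((\<forall>i\<in>{1..l}. b i = b 1) \<and> \<not> b 1) \<longleftrightarrow> \<not> b 1"
    by blast
  then show "one_unless_unanimous l b = return_pmf (if b 1 then One else Zero)"
    unfolding one_unless_unanimous_def by (cases "b 1") auto
qed

lemma one_unless_unanimous_mixed:
  assumes "I \<subseteq> {1..l}" "i \<in> I" "j \<in> {1..l} - I"
  shows "one_unless_unanimous l (\<lambda>k. k \<in> I) = return_pmf One"
  using assms by (auto simp: one_unless_unanimous_def)

lemma expectation_fbias_complement:
  assumes "\<forall>a. pmf P a = pmf P (1 - a)" "x \<le> l"
  shows "measure_pmf.expectation P (fbias l (l - x)) = - measure_pmf.expectation P (fbias l x)"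
proof -
  have reflect: "map_pmf (\<lambda>p. 1 - p) P = P"
  proof (rule pmf_eqI)
    fix a :: real
    have "(\<lambda>p. 1 - p) -` {a} = {1 - a}" by auto
    then show "pmf (map_pmf (\<lambda>p. 1 - p) P) a = pmf P a"
      using assms(1) by (simp add: pmf_map measure_pmf_single)
  qed
  have "fbias l (l - x) (1 - p) = - fbias l x p" for p
    using assms(2) by (simp add: fbias_def algebra_simps)
  then have "measure_pmf.expectation (map_pmf (\<lambda>p. 1 - p) P) (fbias l (l - x))
               = - measure_pmf.expectation P (fbias l x)"
    by simp
  then show ?thesis
    by (simp only: reflect)
qed

lemma c_indist_iff_expectation_nonpos:
  "c_indist c P \<longleftrightarrow>
     (\<forall>l x. 2 \<le> l \<and> l \<le> c \<and> 1 \<le> x \<and> x \<le> l - 1 \<longrightarrow> measure_pmf.expectation P (fbias l x) \<le> 0)"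
proof -
  have "(\<Sum>x = 1..l-1. real (l choose x) * Rterm P l x) = 0
          \<longleftrightarrow> (\<forall>x\<in>{1..l-1}. measure_pmf.expectation P (fbias l x) \<le> 0)" for l
    by (subst sum_nonneg_eq_0_iff) (auto simp: Rterm_def max_def)
  then show ?thesis
    unfolding c_indist_def by auto
qed

lemma c_indist_iff_expectation_zero:
  assumes "\<forall>a. pmf P a = pmf P (1 - a)"
  shows "c_indist c P \<longleftrightarrow>
     (\<forall>l x. 2 \<le> l \<and> l \<le> c \<and> 1 \<le> x \<and> x \<le> l - 1 \<longrightarrow> measure_pmf.expectation P (fbias l x) = 0)"
  unfolding c_indist_iff_expectation_nonpos
proof (intro iffI allI impI)
  fix l x
  assume nonpos: "\<forall>l x. 2 \<le> l \<and> l \<le> c \<and> 1 \<le> x \<and> x \<le> l - 1 \<longrightarrow> measure_pmf.expectation P (fbias l x) \<le> 0"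
    and lx: "2 \<le> l \<and> l \<le> c \<and> 1 \<le> x \<and> x \<le> l - 1"
  have "1 \<le> l - x" "l - x \<le> l - 1"
    using lx by arith+
  with nonpos lx have "measure_pmf.expectation P (fbias l (l - x)) \<le> 0"
    by blast
  then show "measure_pmf.expectation P (fbias l x) = 0"
    using nonpos lx expectation_fbias_complement[OF assms, of x l] by force
qed auto

lemma posterior_scores_vanish_iff:
  assumes "finite (set_pmf P)" "set_pmf P \<subseteq> {0<..<1}"
  shows "(\<forall>l I strat. 2 \<le> l \<and> l \<le> c \<and> I \<subseteq> {1..l} \<and> 1 \<le> card I \<and> card I \<le> l - 1
            \<and> valid_strategy l strat \<and> measure_pmf.prob (pirate_exp P l strat) (evB' I) > 0
          \<longrightarrow> posterior_score P l strat I = 0)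
      \<longleftrightarrow> (\<forall>l x. 2 \<le> l \<and> l \<le> c \<and> 1 \<le> x \<and> x \<le> l - 1 \<longrightarrow> measure_pmf.expectation P (fbias l x) = 0)"
proof -
  have score: "posterior_score P l strat I
      = pmf (strat (\<lambda>i. i \<in> I)) One * measure_pmf.expectation P (fbias l (card I))
          / measure_pmf.prob (pirate_exp P l strat) (evB' I)" if "I \<subseteq> {1..l}" for l I strat
    using posterior_score_eq[OF assms(1) _ that] assms(2) by force
  show ?thesis
  proof (intro iffI allI impI)
    fix l x
    assume scores: "\<forall>l I strat. 2 \<le> l \<and> l \<le> c \<and> I \<subseteq> {1..l} \<and> 1 \<le> card I \<and> card I \<le> l - 1
            \<and> valid_strategy l strat \<and> measure_pmf.prob (pirate_exp P l strat) (evB' I) > 0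
          \<longrightarrow> posterior_score P l strat I = 0"
      and lx: "2 \<le> l \<and> l \<le> c \<and> 1 \<le> x \<and> x \<le> l - 1"
    have accuse: "one_unless_unanimous l (\<lambda>i. i \<in> {1..x}) = return_pmf One"
      using lx by (intro one_unless_unanimous_mixed[of _ _ 1 l]) auto
    have pos: "measure_pmf.prob (pirate_exp P l (one_unless_unanimous l)) (evB' {1..x}) > 0"
      using lx accuse by (intro prob_evB'_pos[OF assms(2)]) auto
    have "posterior_score P l (one_unless_unanimous l) {1..x} = 0"
      using scores[rule_format, of l "{1..x}" "one_unless_unanimous l"] lx pos
        valid_strategy_one_unless_unanimous by auto
    moreover have "{1..x} \<subseteq> {1..l}"
      using lx by auto
    ultimately have "measure_pmf.expectation P (fbias l x)
        / measure_pmf.prob (pirate_exp P l (one_unless_unanimous l)) (evB' {1..x}) = 0"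
      using score accuse by simp
    with pos show "measure_pmf.expectation P (fbias l x) = 0"
      by simp
  next
    fix l I strat
    assume "\<forall>l x. 2 \<le> l \<and> l \<le> c \<and> 1 \<le> x \<and> x \<le> l - 1 \<longrightarrow> measure_pmf.expectation P (fbias l x) = 0"
      and "2 \<le> l \<and> l \<le> c \<and> I \<subseteq> {1..l} \<and> 1 \<le> card I \<and> card I \<le> l - 1
            \<and> valid_strategy l strat \<and> measure_pmf.prob (pirate_exp P l strat) (evB' I) > 0"
    then show "posterior_score P l strat I = 0"
      using score by simp
  qed
qed

theorem proposition1:
  fixes c :: nat and P :: "real pmf"
  assumes "c \<ge> 2" and "finite_bias_dist P"
  shows "(\<forall>l I strat. 2 \<le> l \<and> l \<le> c \<and> I \<subseteq> {1..l} \<and> 1 \<le> card I \<and> card I \<le> l - 1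
            \<and> valid_strategy l strat
            \<and> measure_pmf.prob (pirate_exp P l strat) (evB' I) > 0
          \<longrightarrow> (\<Sum>p\<in>set_pmf P.
                 measure_pmf.prob (pirate_exp P l strat) {\<omega> \<in> evB' I. fst \<omega> = p}
                   / measure_pmf.prob (pirate_exp P l strat) (evB' I)
                 * (real (card I) * bias_sigma p - real (l - card I) * bias_sigma (1 - p))) = 0)
         \<longleftrightarrow> c_indist c P"
proof -
  have fin: "finite (set_pmf P)" and bias: "set_pmf P \<subseteq> {0<..<1}"
    and symm: "\<forall>a. pmf P a = pmf P (1 - a)"
    using assms(2) by (auto simp: finite_bias_dist_def)
  show ?thesis
    using posterior_scores_vanish_iff[OF fin bias, of c]
    unfolding posterior_score_def c_indist_iff_expectation_zero[OF symm] .
qed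

end
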